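(* Let $P$ be a definite program, $M_0$ the ``vanilla'' meta-interpreter and $Q\in B^E_P$ an atomic query. Then: (1) for every $A\in \mathrm{Call}(P,Q)$ there exists $\mathit{solve}(A')\in \mathrm{Call}(M_0\cup \mathit{ce}(P),\mathit{solve}(Q))$ such that $A$ and $A'$ are variants; (2) for every $\mathit{solve}(A)\in \mathrm{Call}(M_0\cup \mathit{ce}(P),\mathit{solve}(Q))$ with $A\in B^E_P$ there exists $A'\in\mathrm{Call}(P,Q)$ such that $A$ and $A'$ are variants.
   Context: Logic programs are definite; a query is a finite sequence of atoms; derivations use the leftmost selection rule (LD-derivations; the LD-tree of $P\cup\{Q\}$ is the SLD-tree under Prolog's left-to-right selection rule). $B^E_P$ (the extended Herbrand base) is the set of atoms of the language of $P$ taken modulo variance. For a program $P$ and a set of queries $S$, the call set $\mathrm{Call}(P,S)$ is the set of atoms $A$ such that a variant of $A$ is a selected atom in some branch of the LD-tree of $P\cup\{Q\}$ for some $Q\in S$; $\mathrm{Call}(P,Q)=\mathrm{Call}(P,\{Q\})$. Clause encoding: a clause body $B_1,\dots,B_n$ ($n\ge1$) is represented as the term $(B_1,(B_2,\dots,B_n))$ built with a binary functor $,/2$ (for $n=1$ just $B_1$), and an empty body by the constant $\mathit{true}$. The clause-encoding $\mathit{ce}(P)$ is the set of facts $\mathit{clause}(H,B)$, one for each clause $H\leftarrow B$ of $P$. The symbols $,/2$, $\mathit{clause}$, $\mathit{solve}$ do not occur in the language of $P$. The ``vanilla'' meta-interpreter $M_0$ is the program $\mathit{solve}(\mathit{true}).$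 $\mathit{solve}((A,B))\leftarrow \mathit{solve}(A),\mathit{solve}(B).$ $\mathit{solve}(H)\leftarrow \mathit{clause}(H,B),\mathit{solve}(B).$ *)

theory Defs
  imports Main
begin

text \<open>Symbols: the user symbols of the program P (Usr f) together with the
reserved symbols of the meta-level encoding: ,/2, true, clause, solve.\<close>
datatype 'f sym = Usr 'f | Comma | TrueS | ClauseS | SolveS

datatype ('f, 'v) trm = Var 'v | Fn 'f "('f, 'v) trm list"

type_synonym ('f, 'v) subst = "'v \<Rightarrow> ('f, 'v) trm"

fun subst_apply :: "('f, 'v) trm \<Rightarrow> ('f, 'v) subst \<Rightarrow> ('f, 'v) trm" (infixl "\<cdot>" 67) where
  "Var x \<cdot> \<sigma> = \<sigma> x"
| "Fn f ts \<cdot> \<sigma> = Fn f (map (\<lambda>t. t \<cdot> \<sigma>) ts)"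

fun vars :: "('f, 'v) trm \<Rightarrow> 'v set" where
  "vars (Var x) = {x}"
| "vars (Fn f ts) = (\<Union>t\<in>set ts. vars t)"

fun syms :: "('f, 'v) trm \<Rightarrow> ('f \<times> nat) set" where
  "syms (Var x) = {}"
| "syms (Fn f ts) = insert (f, length ts) (\<Union>t\<in>set ts. syms t)"

definition unifier :: "('f, 'v) subst \<Rightarrow> ('f, 'v) trm \<Rightarrow> ('f, 'v) trm \<Rightarrow> bool" where
  "unifier \<sigma> s t \<longleftrightarrow> s \<cdot> \<sigma> = t \<cdot> \<sigma>"

definition mgu :: "('f, 'v) subst \<Rightarrow> ('f, 'v) trm \<Rightarrow> ('f, 'v) trm \<Rightarrow> bool" where
  "mgu \<sigma> s t \<longleftrightarrow> unifier \<sigma> s t \<and>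
     (\<forall>\<tau>. unifier \<tau> s t \<longrightarrow> (\<exists>\<delta>. \<forall>x. \<tau> x = \<sigma> x \<cdot> \<delta>))"

definition variant :: "('f, 'v) trm \<Rightarrow> ('f, 'v) trm \<Rightarrow> bool" where
  "variant s t \<longleftrightarrow> (\<exists>\<rho>. bij \<rho> \<and> s \<cdot> (Var \<circ> \<rho>) = t)"

text \<open>A clause H <- B1,...,Bn is a pair (H, [B1,...,Bn]); a query is a list of atoms.\<close>
type_synonym ('f, 'v) clause = "('f, 'v) trm \<times> ('f, 'v) trm list"
type_synonym ('f, 'v) program = "('f, 'v) clause set"

definition clause_atoms :: "('f, 'v) clause \<Rightarrow> ('f, 'v) trm set" where
  "clause_atoms c = insert (fst c) (set (snd c))"

definition vars_list :: "('f, 'v) trm list \<Rightarrow> 'v set" where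
  "vars_list As = (\<Union>A\<in>set As. vars A)"

definition vars_clause :: "('f, 'v) clause \<Rightarrow> 'v set" where
  "vars_clause c = vars (fst c) \<union> vars_list (snd c)"

definition rename_clause :: "('v \<Rightarrow> 'v) \<Rightarrow> ('f, 'v) clause \<Rightarrow> ('f, 'v) clause" where
  "rename_clause \<rho> c = (fst c \<cdot> (Var \<circ> \<rho>), map (\<lambda>B. B \<cdot> (Var \<circ> \<rho>)) (snd c))"

definition user_atom :: "('f sym, 'v) trm \<Rightarrow> bool" where
  "user_atom A \<longleftrightarrow> (\<exists>p ts. A = Fn p ts) \<and> fst ` syms A \<subseteq> range Usr"

definition definite_program :: "('f sym, 'v) program \<Rightarrow> bool" where
  "definite_program P \<longleftrightarrow> finite P \<and> (\<forall>c\<in>P. \<forall>A\<in>clause_atoms c. user_atom A)"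

fun pred_of :: "('f, 'v) trm \<Rightarrow> ('f \<times> nat) set" where
  "pred_of (Var x) = {}"
| "pred_of (Fn p ts) = {(p, length ts)}"

fun arg_syms :: "('f, 'v) trm \<Rightarrow> ('f \<times> nat) set" where
  "arg_syms (Var x) = {}"
| "arg_syms (Fn p ts) = (\<Union>t\<in>set ts. syms t)"

definition preds :: "('f, 'v) program \<Rightarrow> ('f \<times> nat) set" where
  "preds P = (\<Union>c\<in>P. \<Union>A\<in>clause_atoms c. pred_of A)"

definition funs :: "('f, 'v) program \<Rightarrow> ('f \<times> nat) set" where
  "funs P = (\<Union>c\<in>P. \<Union>A\<in>clause_atoms c. arg_syms A)"

definition BE :: "('f, 'v) program \<Rightarrow> ('f, 'v) trm set" where
  "BE P = {A. (\<exists>p ts. A = Fn p ts \<and> (p, length ts) \<in> preds P \<and>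
                   (\<forall>t\<in>set ts. syms t \<subseteq> funs P))}"

definition ld_step :: "('f, 'v) program \<Rightarrow> ('f, 'v) trm list \<Rightarrow> ('f, 'v) trm list \<Rightarrow> bool" where
  "ld_step P Q R \<longleftrightarrow> (\<exists>A Bs c \<rho> \<theta>. Q = A # Bs \<and> c \<in> P \<and> bij \<rho> \<and>
      vars_clause (rename_clause \<rho> c) \<inter> vars_list Q = {} \<and>
      mgu \<theta> A (fst (rename_clause \<rho> c)) \<and>
      R = map (\<lambda>B. B \<cdot> \<theta>) (snd (rename_clause \<rho> c) @ Bs))"

definition Call :: "('f, 'v) program \<Rightarrow> ('f, 'v) trm list set \<Rightarrow> ('f, 'v) trm set" where
  "Call P S = {A. \<exists>Q\<in>S. \<exists>B Bs. (ld_step P)\<^sup>*\<^sup>* Q (B # Bs) \<and> variant A B}"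

fun enc_body :: "('f sym, 'v) trm list \<Rightarrow> ('f sym, 'v) trm" where
  "enc_body [] = Fn TrueS []"
| "enc_body [B] = B"
| "enc_body (B # Bs) = Fn Comma [B, enc_body Bs]"

definition ce :: "('f sym, 'v) program \<Rightarrow> ('f sym, 'v) program" where
  "ce P = {(Fn ClauseS [fst c, enc_body (snd c)], []) | c. c \<in> P}"

abbreviation solve :: "('f sym, 'v) trm \<Rightarrow> ('f sym, 'v) trm" where
  "solve t \<equiv> Fn SolveS [t]"

definition M0 :: "'v \<Rightarrow> 'v \<Rightarrow> ('f sym, 'v) program" where
  "M0 x y = {(solve (Fn TrueS []), []),
             (solve (Fn Comma [Var x, Var y]), [solve (Var x), solve (Var y)]),
             (solve (Var x), [Fn ClauseS [Var x, Var y], solve (Var y)])}"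

end

(*
  Part (2): along an LD-derivation of M0 \<union> ce(P) from solve(Q), every query is of one of three
  kinds. Either it is a list of goals solve(G) with G built from true, ,/2 and object atoms,
  whose flattening is, up to renaming, a query of an LD-derivation of P from Q; or it is the
  query clause(A, b), solve(b), ... reached right after selecting solve(A) for an object atom A;
  or it is stuck, its selected atom clause(true, _) or clause((_, _), _) matching no clause.
  So a selected solve(A) with A an object atom is, up to renaming, selected in the LD-tree of P.
  The two derivations use different mgus, but an mgu of a problem that has a solution fixing the
  variables of the query acts on these variables as a renaming, which keeps the correspondence.

  Part (1): conversely, M0 \<union> ce(P) simulates each LD-step of P: it unfolds true and conjunctions
  until the selected object atom A is exposed, then resolves solve(A) with the third clause of M0
  and clause(A, b) with the encoding of the program clause. Infinitely many variables guarantee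
  the fresh variables this needs.
*)

theory Submission
  imports Defs "HOL-Library.Equipollence" "HOL-Combinatorics.Transposition"
begin

abbreviation subst_list :: "('f, 'v) trm list \<Rightarrow> ('f, 'v) subst \<Rightarrow> ('f, 'v) trm list"
    (infixl "\<cdot>\<^sub>l" 67) where
  "Ts \<cdot>\<^sub>l \<sigma> \<equiv> map (\<lambda>t. t \<cdot> \<sigma>) Ts"

lemma subst_subst: "t \<cdot> \<sigma> \<cdot> \<tau> = t \<cdot> (\<lambda>x. \<sigma> x \<cdot> \<tau>)"
  by (induction t) auto

lemma subst_cong: "(\<And>x. x \<in> vars t \<Longrightarrow> \<sigma> x = \<tau> x) \<Longrightarrow> t \<cdot> \<sigma> = t \<cdot> \<tau>"
  by (induction t) auto

lemma subst_Var [simp]: "t \<cdot> Var = t"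
  by (induction t) (auto intro: map_idI)

lemma subst_id_on_vars: "(\<And>x. x \<in> vars t \<Longrightarrow> \<sigma> x = Var x) \<Longrightarrow> t \<cdot> \<sigma> = t"
  using subst_cong[of t \<sigma> Var] by simp

lemma vars_subst: "vars (t \<cdot> \<sigma>) = (\<Union>x\<in>vars t. vars (\<sigma> x))"
  by (induction t) auto

lemma finite_vars [simp]: "finite (vars t)"
  by (induction t) auto

lemma subst_eq_VarD: "t \<cdot> \<sigma> = Var z \<Longrightarrow> \<exists>w. t = Var w \<and> \<sigma> w = Var z"
  by (cases t) auto

lemma finite_vars_list [simp]: "finite (vars_list Ts)"
  by (auto simp: vars_list_def)

lemma vars_list_simps [simp]:
  "vars_list [] = {}"
  "vars_list (t # Ts) = vars t \<union> vars_list Ts"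
  "vars_list (Ts @ Us) = vars_list Ts \<union> vars_list Us"
  by (auto simp: vars_list_def)

lemma vars_list_subst: "vars_list (Ts \<cdot>\<^sub>l \<sigma>) = (\<Union>x\<in>vars_list Ts. vars (\<sigma> x))"
  by (induction Ts) (auto simp: vars_subst)

lemma subst_list_cong: "(\<And>x. x \<in> vars_list Ts \<Longrightarrow> \<sigma> x = \<tau> x) \<Longrightarrow> Ts \<cdot>\<^sub>l \<sigma> = Ts \<cdot>\<^sub>l \<tau>"
  by (induction Ts) (auto intro: subst_cong)

lemma subst_list_id_on_vars: "(\<And>x. x \<in> vars_list Ts \<Longrightarrow> \<sigma> x = Var x) \<Longrightarrow> Ts \<cdot>\<^sub>l \<sigma> = Ts"
  using subst_list_cong[of Ts \<sigma> Var] by simp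

lemma rename_rename: "t \<cdot> (Var \<circ> \<rho>) \<cdot> (Var \<circ> \<pi>) = t \<cdot> (Var \<circ> (\<pi> \<circ> \<rho>))"
  by (simp add: subst_subst comp_def)

lemma rename_list_rename: "Ts \<cdot>\<^sub>l (Var \<circ> \<rho>) \<cdot>\<^sub>l (Var \<circ> \<pi>) = Ts \<cdot>\<^sub>l (Var \<circ> (\<pi> \<circ> \<rho>))"
  by (simp add: rename_rename)

lemma vars_rename: "vars (t \<cdot> (Var \<circ> \<pi>)) = \<pi> ` vars t"
  by (auto simp: vars_subst)

lemma vars_list_rename: "vars_list (Ts \<cdot>\<^sub>l (Var \<circ> \<pi>)) = \<pi> ` vars_list Ts"
  by (auto simp: vars_list_subst)

lemma inj_on_extends_to_bij:
  fixes f :: "'a \<Rightarrow> 'a"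
  assumes "finite W" "inj_on f W"
  shows "\<exists>\<pi>. bij \<pi> \<and> (\<forall>w\<in>W. \<pi> w = f w)"
  using assms
proof (induction W rule: finite_induct)
  case empty
  show ?case using bij_id by blast
next
  case (insert a W)
  then obtain \<pi> where \<pi>: "bij \<pi>" "\<forall>w\<in>W. \<pi> w = f w" by auto
  define \<pi>' where "\<pi>' = transpose (\<pi> a) (f a) \<circ> \<pi>"
  have "\<pi>' w = f w" if "w \<in> W" for w
  proof -
    have "\<pi> w \<noteq> \<pi> a" using that insert(2) bij_is_inj[OF \<pi>(1)] by (metis injD)
    moreover have "f w \<noteq> f a" using insert(2,4) that by (auto simp: inj_on_def)
    ultimately show ?thesis using \<pi>(2) that by (simp add: \<pi>'_def transpose_apply_other)
  qed
  moreover have "bij \<pi>'" using \<pi>(1) by (simp add: \<pi>'_def bij_comp)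
  ultimately show ?case by (auto simp: \<pi>'_def)
qed

lemma bij_mapping_two_points:
  fixes x y a b :: 'a
  assumes "x \<noteq> y" "a \<noteq> b"
  shows "\<exists>\<rho>. bij \<rho> \<and> \<rho> x = a \<and> \<rho> y = b"
  using inj_on_extends_to_bij[of "{x, y}" "\<lambda>z. if z = x then a else b"] assms
  by (auto simp: inj_on_def)

lemma infinite_imp_inj_not_surj:
  assumes "infinite (UNIV :: 'a set)"
  obtains h :: "'a \<Rightarrow> 'a" and u where "inj h" "u \<notin> range h"
proof -
  obtain B :: "'a set" where "B \<subset> UNIV" "(UNIV :: 'a set) \<approx> B"
    using assms[unfolded infinite_iff_psubset] by blast
  then show ?thesis
    using that unfolding eqpoll_def bij_betw_def by blast
qed

lemma ex_two_fresh:
  assumes "infinite (UNIV :: 'a set)" "finite (S :: 'a set)"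
  obtains a b where "a \<noteq> b" "a \<notin> S" "b \<notin> S"
proof -
  obtain a where "a \<notin> S" using ex_new_if_finite[OF assms] by blast
  moreover obtain b where "b \<notin> insert a S" using ex_new_if_finite assms by blast
  ultimately show ?thesis using that by blast
qed

lemma subst_invertible_on_imp_renaming:
  assumes "finite V" "\<forall>z\<in>V. \<sigma> z \<cdot> \<delta> = Var z"
  shows "\<exists>\<pi>. bij \<pi> \<and> (\<forall>z\<in>V. \<sigma> z = Var (\<pi> z))"
proof -
  have "\<forall>z\<in>V. \<exists>w. \<sigma> z = Var w \<and> \<delta> w = Var z"
    using assms(2) by (auto dest: subst_eq_VarD)
  then obtain f where f: "\<forall>z\<in>V. \<sigma> z = Var (f z) \<and> \<delta> (f z) = Var z"
    by (rule bchoice[THEN exE])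
  then have "inj_on f V"
    by (metis inj_onI trm.inject(1))
  then obtain \<pi> where "bij \<pi>" "\<forall>w\<in>V. \<pi> w = f w"
    using inj_on_extends_to_bij[OF assms(1)] by blast
  with f show ?thesis by auto
qed

lemma mgu_unifies: "mgu \<theta> s t \<Longrightarrow> s \<cdot> \<theta> = t \<cdot> \<theta>"
  by (simp add: mgu_def unifier_def)

lemma mgu_most_general: "mgu \<theta> s t \<Longrightarrow> s \<cdot> \<tau> = t \<cdot> \<tau> \<Longrightarrow> \<exists>\<delta>. \<forall>x. \<tau> x = \<theta> x \<cdot> \<delta>"
  by (simp add: mgu_def unifier_def)

lemma mguI_absorbing:
  assumes "s \<cdot> \<sigma> = t \<cdot> \<sigma>" "\<And>\<tau>. s \<cdot> \<tau> = t \<cdot> \<tau> \<Longrightarrow> \<forall>x. \<tau> x = \<sigma> x \<cdot> \<tau>"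
  shows "mgu \<sigma> s t"
  using assms unfolding mgu_def unifier_def by blast

lemma mgu_fixed_var_fresh:
  assumes "mgu \<theta> s t" "s \<cdot> \<sigma> = t \<cdot> \<sigma>" "\<forall>z\<in>insert b V. \<sigma> z = Var z" "b \<notin> V"
  obtains b' where "\<theta> b = Var b'" "\<forall>z\<in>V. b' \<notin> vars (\<theta> z)"
proof -
  obtain \<delta> where "\<forall>z. \<sigma> z = \<theta> z \<cdot> \<delta>"
    using mgu_most_general[OF assms(1,2)] by blast
  with assms(3) have \<delta>: "\<forall>z\<in>insert b V. \<theta> z \<cdot> \<delta> = Var z"
    by simp
  then have "\<theta> b \<cdot> \<delta> = Var b" by simp
  then obtain b' where b': "\<theta> b = Var b'" "\<delta> b' = Var b"
    by (blast dest: subst_eq_VarD)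
  have "\<forall>z\<in>V. b' \<notin> vars (\<theta> z)"
  proof (intro ballI notI)
    fix z assume "z \<in> V" "b' \<in> vars (\<theta> z)"
    with \<delta> have "\<theta> z \<cdot> \<delta> = Var z" by simp
    then obtain w where "\<theta> z = Var w" "\<delta> w = Var z"
      by (blast dest: subst_eq_VarD)
    with \<open>b' \<in> vars (\<theta> z)\<close> b'(2) have "z = b" by simp
    with \<open>z \<in> V\<close> assms(4) show False by simp
  qed
  with b'(1) show ?thesis by (rule that)
qed

lemma mgu_rename:
  assumes "mgu \<theta> s t" "bij \<pi>"
  shows "mgu (\<lambda>z. \<theta> (inv \<pi> z) \<cdot> (Var \<circ> \<pi>)) (s \<cdot> (Var \<circ> \<pi>)) (t \<cdot> (Var \<circ> \<pi>))"
    (is "mgu ?\<theta> _ _")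
proof -
  have inj: "inj \<pi>" and surj: "surj \<pi>" using assms(2) bij_is_inj bij_is_surj by auto
  have commute: "u \<cdot> (Var \<circ> \<pi>) \<cdot> ?\<theta> = u \<cdot> \<theta> \<cdot> (Var \<circ> \<pi>)" for u
    by (simp add: subst_subst inj)
  show ?thesis
    unfolding mgu_def unifier_def
  proof (intro conjI allI impI)
    show "s \<cdot> (Var \<circ> \<pi>) \<cdot> ?\<theta> = t \<cdot> (Var \<circ> \<pi>) \<cdot> ?\<theta>"
      using mgu_unifies[OF assms(1)] by (simp add: commute)
  next
    fix \<tau> assume "s \<cdot> (Var \<circ> \<pi>) \<cdot> \<tau> = t \<cdot> (Var \<circ> \<pi>) \<cdot> \<tau>"
    then have "s \<cdot> (\<tau> \<circ> \<pi>) = t \<cdot> (\<tau> \<circ> \<pi>)" by (simp add: subst_subst comp_def)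
    then obtain \<delta> where \<delta>: "\<forall>x. \<tau> (\<pi> x) = \<theta> x \<cdot> \<delta>"
      using mgu_most_general[OF assms(1)] by fastforce
    have "\<tau> z = ?\<theta> z \<cdot> (\<delta> \<circ> inv \<pi>)" for z
      using \<delta>[rule_format, of "inv \<pi> z"] by (simp add: subst_subst inj surj_f_inv_f[OF surj])
    then show "\<exists>\<delta>. \<forall>x. \<tau> x = ?\<theta> x \<cdot> \<delta>" by blast
  qed
qed

lemma mgu_pair_fresh_var:
  assumes "mgu \<theta> s t" "b \<notin> vars s" "b \<notin> vars t" "b \<notin> vars e"
  shows "mgu (\<theta>(b := e \<cdot> \<theta>)) (Fn f [s, Var b]) (Fn f [t, e])"
proof -
  have unchanged: "u \<cdot> \<theta>(b := e \<cdot> \<theta>) = u \<cdot> \<theta>" if "b \<notin> vars u" for u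
    using that by (intro subst_cong) auto
  show ?thesis
    unfolding mgu_def unifier_def
  proof (intro conjI allI impI)
    show "Fn f [s, Var b] \<cdot> \<theta>(b := e \<cdot> \<theta>) = Fn f [t, e] \<cdot> \<theta>(b := e \<cdot> \<theta>)"
      using assms unchanged mgu_unifies[OF assms(1)] by simp
  next
    fix \<tau> assume "Fn f [s, Var b] \<cdot> \<tau> = Fn f [t, e] \<cdot> \<tau>"
    then have "s \<cdot> \<tau> = t \<cdot> \<tau>" and \<tau>b: "\<tau> b = e \<cdot> \<tau>" by auto
    then obtain \<delta> where \<delta>: "\<forall>x. \<tau> x = \<theta> x \<cdot> \<delta>" using mgu_most_general[OF assms(1)] by blast
    then have "\<tau> = (\<lambda>x. \<theta> x \<cdot> \<delta>)" by auto
    then have "e \<cdot> \<tau> = e \<cdot> \<theta> \<cdot> \<delta>" by (simp add: subst_subst)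
    then have "\<forall>z. \<tau> z = (\<theta>(b := e \<cdot> \<theta>)) z \<cdot> \<delta>" using \<delta> \<tau>b by auto
    then show "\<exists>\<delta>. \<forall>z. \<tau> z = (\<theta>(b := e \<cdot> \<theta>)) z \<cdot> \<delta>" by blast
  qed
qed

text \<open>\<open>\<theta>\<close> binds \<open>b\<close>, and \<open>b\<close> may also occur in the range of \<open>\<theta>\<close>; composing with an
  injection \<open>h\<close> whose range misses \<open>u\<close> makes room for \<open>u\<close> as the new image of \<open>b\<close>.\<close>
lemma mgu_pair_fresh_var_inverse:
  assumes "mgu \<theta> (Fn f [s, Var b]) (Fn f [t, e])" "b \<notin> vars s" "b \<notin> vars t" "b \<notin> vars e"
    and "inj h" "u \<notin> range h"
  shows "mgu (\<lambda>z. if z = b then Var u else \<theta> z \<cdot> (Var \<circ> h)) s t"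
    (is "mgu ?\<theta> s t")
proof -
  have away_from_b: "w \<cdot> ?\<theta> = w \<cdot> \<theta> \<cdot> (Var \<circ> h)" if "b \<notin> vars w" for w
    unfolding subst_subst using that by (intro subst_cong) auto
  show ?thesis
    unfolding mgu_def unifier_def
  proof (intro conjI allI impI)
    show "s \<cdot> ?\<theta> = t \<cdot> ?\<theta>"
      using mgu_unifies[OF assms(1)] assms(2,3) by (simp add: away_from_b)
  next
    fix \<tau> assume st: "s \<cdot> \<tau> = t \<cdot> \<tau>"
    define \<tau>' where "\<tau>' = \<tau>(b := e \<cdot> \<tau>)"
    have "w \<cdot> \<tau>' = w \<cdot> \<tau>" if "b \<notin> vars w" for w
      using that by (intro subst_cong) (auto simp: \<tau>'_def)
    then have "Fn f [s, Var b] \<cdot> \<tau>' = Fn f [t, e] \<cdot> \<tau>'"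
      using st assms(2-4) by (simp add: \<tau>'_def)
    then obtain \<delta> where \<delta>: "\<forall>z. \<tau>' z = \<theta> z \<cdot> \<delta>" using mgu_most_general[OF assms(1)] by blast
    define \<delta>' where "\<delta>' = (\<lambda>w. if w = u then \<tau> b else \<delta> (inv h w))"
    have h_\<delta>': "(\<lambda>w. \<delta>' (h w)) = \<delta>"
    proof
      fix w
      have "h w \<noteq> u" using assms(6) by auto
      then show "\<delta>' (h w) = \<delta> w" using assms(5) by (simp add: \<delta>'_def)
    qed
    have "\<tau> z = ?\<theta> z \<cdot> \<delta>'" for z
    proof (cases "z = b")
      case True
      then show ?thesis by (simp add: \<delta>'_def)
    next
      case False
      then have "?\<theta> z \<cdot> \<delta>' = \<theta> z \<cdot> \<delta>" by (simp add: subst_subst h_\<delta>')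
      also have "\<dots> = \<tau> z" using \<delta>[rule_format, of z] False by (simp add: \<tau>'_def)
      finally show ?thesis by simp
    qed
    then show "\<exists>\<delta>. \<forall>x. \<tau> x = ?\<theta> x \<cdot> \<delta>" by blast
  qed
qed

section \<open>LD-derivations up to renaming\<close>

lemma ld_stepI:
  assumes "c \<in> P" "bij \<rho>" "vars_clause (rename_clause \<rho> c) \<inter> vars_list (A # Bs) = {}"
    and "mgu \<theta> A (fst (rename_clause \<rho> c))" "R = (snd (rename_clause \<rho> c) @ Bs) \<cdot>\<^sub>l \<theta>"
  shows "ld_step P (A # Bs) R"
  using assms unfolding ld_step_def by blast

lemma ld_stepE:
  assumes "ld_step P L R"
  obtains A Bs c \<rho> \<theta> where "L = A # Bs" "c \<in> P" "bij \<rho>"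
    "vars_clause (rename_clause \<rho> c) \<inter> vars_list L = {}"
    "mgu \<theta> A (fst (rename_clause \<rho> c))" "R = (snd (rename_clause \<rho> c) @ Bs) \<cdot>\<^sub>l \<theta>"
  using assms unfolding ld_step_def by blast

lemma rename_clause_comp: "rename_clause (\<pi> \<circ> \<rho>) c = rename_clause \<pi> (rename_clause \<rho> c)"
  by (simp add: rename_clause_def rename_rename)

lemma vars_clause_rename: "vars_clause (rename_clause \<pi> c) = \<pi> ` vars_clause c"
  by (simp add: vars_clause_def rename_clause_def vars_rename vars_list_rename image_Un)

lemma ld_step_rename:
  assumes "ld_step P L R" "bij \<pi>"
  shows "ld_step P (L \<cdot>\<^sub>l (Var \<circ> \<pi>)) (R \<cdot>\<^sub>l (Var \<circ> \<pi>))"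
proof -
  obtain A Bs c \<rho> \<theta> where L: "L = A # Bs" and c: "c \<in> P" "bij \<rho>"
    and disj: "vars_clause (rename_clause \<rho> c) \<inter> vars_list L = {}"
    and \<theta>: "mgu \<theta> A (fst (rename_clause \<rho> c))" and R: "R = (snd (rename_clause \<rho> c) @ Bs) \<cdot>\<^sub>l \<theta>"
    using assms(1) by (rule ld_stepE)
  define \<theta>' where "\<theta>' z = \<theta> (inv \<pi> z) \<cdot> (Var \<circ> \<pi>)" for z
  have inj: "inj \<pi>" using assms(2) by (rule bij_is_inj)
  have commute: "t \<cdot> (Var \<circ> \<pi>) \<cdot> \<theta>' = t \<cdot> \<theta> \<cdot> (Var \<circ> \<pi>)" for t
    using inj by (simp add: \<theta>'_def subst_subst)
  show ?thesis
    unfolding L list.map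
  proof (rule ld_stepI)
    show "c \<in> P" "bij (\<pi> \<circ> \<rho>)" using c assms(2) by (auto intro: bij_comp)
    have "vars_list (A \<cdot> (Var \<circ> \<pi>) # Bs \<cdot>\<^sub>l (Var \<circ> \<pi>)) = \<pi> ` vars_list L"
      using vars_list_rename[of \<pi> L] L by simp
    then show "vars_clause (rename_clause (\<pi> \<circ> \<rho>) c) \<inter> vars_list (A \<cdot> (Var \<circ> \<pi>) # Bs \<cdot>\<^sub>l (Var \<circ> \<pi>)) = {}"
      using disj unfolding rename_clause_comp vars_clause_rename
      by (simp add: image_Int[OF inj, symmetric])
    show "mgu \<theta>' (A \<cdot> (Var \<circ> \<pi>)) (fst (rename_clause (\<pi> \<circ> \<rho>) c))"
      using mgu_rename[OF \<theta> assms(2)]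
      by (simp add: rename_clause_comp rename_clause_def rename_rename \<theta>'_def[abs_def])
    show "R \<cdot>\<^sub>l (Var \<circ> \<pi>) = (snd (rename_clause (\<pi> \<circ> \<rho>) c) @ Bs \<cdot>\<^sub>l (Var \<circ> \<pi>)) \<cdot>\<^sub>l \<theta>'"
      unfolding rename_clause_comp by (simp add: R commute rename_clause_def)
  qed
qed

text \<open>Derivations that pick different mgus match only up to renaming; by \<open>ld_step_rename\<close>
  this notion is stable under LD-steps.\<close>
definition reachable_upto_renaming :: "('f, 'v) program \<Rightarrow> ('f, 'v) trm \<Rightarrow> ('f, 'v) trm list \<Rightarrow> bool"
  where "reachable_upto_renaming P Q L \<longleftrightarrow> (\<exists>\<pi>. bij \<pi> \<and> (ld_step P)\<^sup>*\<^sup>* [Q] (L \<cdot>\<^sub>l (Var \<circ> \<pi>)))"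

lemma reachable_upto_renaming_start: "reachable_upto_renaming P Q [Q]"
  unfolding reachable_upto_renaming_def by (auto intro: exI[of _ id])

lemma reachable_upto_renaming_step:
  assumes "reachable_upto_renaming P Q L" "ld_step P L R"
  shows "reachable_upto_renaming P Q R"
proof -
  obtain \<pi> where "bij \<pi>" "(ld_step P)\<^sup>*\<^sup>* [Q] (L \<cdot>\<^sub>l (Var \<circ> \<pi>))"
    using assms(1) unfolding reachable_upto_renaming_def by blast
  moreover have "ld_step P (L \<cdot>\<^sub>l (Var \<circ> \<pi>)) (R \<cdot>\<^sub>l (Var \<circ> \<pi>))" if "bij \<pi>" for \<pi>
    using assms(2) that by (rule ld_step_rename)
  ultimately show ?thesis
    unfolding reachable_upto_renaming_def by (meson rtranclp.rtrancl_into_rtrancl)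
qed

lemma reachable_upto_renaming_rename:
  assumes "reachable_upto_renaming P Q L" "bij \<pi>"
  shows "reachable_upto_renaming P Q (L \<cdot>\<^sub>l (Var \<circ> \<pi>))"
proof -
  obtain \<pi>0 where \<pi>0: "bij \<pi>0" "(ld_step P)\<^sup>*\<^sup>* [Q] (L \<cdot>\<^sub>l (Var \<circ> \<pi>0))"
    using assms(1) unfolding reachable_upto_renaming_def by blast
  have "(\<pi>0 \<circ> inv \<pi>) \<circ> \<pi> = \<pi>0"
    using bij_is_inj[OF assms(2)] by (auto simp: fun_eq_iff)
  then have eq: "L \<cdot>\<^sub>l (Var \<circ> \<pi>) \<cdot>\<^sub>l (Var \<circ> (\<pi>0 \<circ> inv \<pi>)) = L \<cdot>\<^sub>l (Var \<circ> \<pi>0)"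
    by (simp only: rename_list_rename)
  show ?thesis
    unfolding reachable_upto_renaming_def
  proof (intro exI conjI)
    show "bij (\<pi>0 \<circ> inv \<pi>)"
      using \<pi>0(1) assms(2) by (simp add: bij_comp bij_imp_bij_inv)
    show "(ld_step P)\<^sup>*\<^sup>* [Q] (L \<cdot>\<^sub>l (Var \<circ> \<pi>) \<cdot>\<^sub>l (Var \<circ> (\<pi>0 \<circ> inv \<pi>)))"
      unfolding eq by (rule \<pi>0(2))
  qed
qed

lemma reachable_upto_renaming_inj:
  assumes "reachable_upto_renaming P Q (L \<cdot>\<^sub>l (Var \<circ> h))" "inj h"
  shows "reachable_upto_renaming P Q L"
proof -
  obtain g where g: "bij g" "\<forall>w\<in>vars_list L. g w = h w"
    using inj_on_extends_to_bij[OF finite_vars_list inj_on_subset[OF assms(2) subset_UNIV]] by blast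
  then have "L \<cdot>\<^sub>l (Var \<circ> h) = L \<cdot>\<^sub>l (Var \<circ> g)"
    by (intro subst_list_cong) simp
  then have "reachable_upto_renaming P Q (L \<cdot>\<^sub>l (Var \<circ> g) \<cdot>\<^sub>l (Var \<circ> inv g))"
    using reachable_upto_renaming_rename[OF assms(1) bij_imp_bij_inv[OF g(1)]] by (simp only:)
  moreover have "inv g \<circ> g = id"
    using bij_is_inj[OF g(1)] by simp
  ultimately show ?thesis
    by (simp only: rename_list_rename) simp
qed

lemma reachable_upto_renaming_subst:
  assumes "reachable_upto_renaming P Q L" "\<forall>z\<in>vars_list L. \<sigma> z \<cdot> \<delta> = Var z"
  shows "reachable_upto_renaming P Q (L \<cdot>\<^sub>l \<sigma>)"
proof -
  obtain \<pi> where \<pi>: "bij \<pi>" "\<forall>z\<in>vars_list L. \<sigma> z = Var (\<pi> z)"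
    using subst_invertible_on_imp_renaming[OF finite_vars_list assms(2)] by blast
  then have "L \<cdot>\<^sub>l \<sigma> = L \<cdot>\<^sub>l (Var \<circ> \<pi>)"
    by (intro subst_list_cong) simp
  with reachable_upto_renaming_rename[OF assms(1) \<pi>(1)] show ?thesis
    by (simp only:)
qed

text \<open>If some unifier of \<open>s\<close> and \<open>t\<close> leaves the variables of \<open>L\<close> alone, then an mgu acts on
  them as a renaming.\<close>
lemma reachable_upto_renaming_mgu:
  assumes "reachable_upto_renaming P Q L" "mgu \<theta> s t" "s \<cdot> \<sigma> = t \<cdot> \<sigma>"
    and "\<forall>z\<in>vars_list L. \<sigma> z = Var z"
  shows "reachable_upto_renaming P Q (L \<cdot>\<^sub>l \<theta>)"
proof -
  obtain \<delta> where "\<forall>z. \<sigma> z = \<theta> z \<cdot> \<delta>"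
    using mgu_most_general[OF assms(2,3)] by blast
  with assms(4) have "\<forall>z\<in>vars_list L. \<theta> z \<cdot> \<delta> = Var z"
    by simp
  then show ?thesis
    by (rule reachable_upto_renaming_subst[OF assms(1)])
qed

lemma reachable_upto_renaming_Call:
  assumes "reachable_upto_renaming P Q (A # L)"
  shows "A \<in> Call P {[Q]}"
proof -
  obtain \<pi> where "bij \<pi>" "(ld_step P)\<^sup>*\<^sup>* [Q] (A \<cdot> (Var \<circ> \<pi>) # L \<cdot>\<^sub>l (Var \<circ> \<pi>))"
    using assms unfolding reachable_upto_renaming_def by auto
  moreover from \<open>bij \<pi>\<close> have "variant A (A \<cdot> (Var \<circ> \<pi>))"
    unfolding variant_def by blast
  ultimately show ?thesis
    unfolding Call_def by blast
qed

definition usr_headed :: "('f sym, 'v) trm \<Rightarrow> bool" where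
  "usr_headed t \<longleftrightarrow> (\<exists>p ts. t = Fn (Usr p) ts)"

text \<open>The object-level query that a meta-level goal \<open>solve t\<close> stands for.\<close>
fun conjuncts :: "('f sym, 'v) trm \<Rightarrow> ('f sym, 'v) trm list" where
  "conjuncts (Fn Comma [a, b]) = conjuncts a @ conjuncts b"
| "conjuncts (Fn TrueS []) = []"
| "conjuncts t = [t]"

inductive conj_term :: "('f sym, 'v) trm \<Rightarrow> bool" where
  "conj_term (Fn TrueS [])"
| "conj_term a \<Longrightarrow> conj_term b \<Longrightarrow> conj_term (Fn Comma [a, b])"
| "usr_headed t \<Longrightarrow> conj_term t"

lemma conj_termE:
  assumes "conj_term t"
  obtains "t = Fn TrueS []"
  | X Y where "t = Fn Comma [X, Y]" "conj_term X" "conj_term Y"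
  | "usr_headed t"
  using assms by (cases rule: conj_term.cases) auto

definition all_conjuncts :: "('f sym, 'v) trm list \<Rightarrow> ('f sym, 'v) trm list" where
  "all_conjuncts Gs = concat (map conjuncts Gs)"

lemma usr_headed_subst: "usr_headed t \<Longrightarrow> usr_headed (t \<cdot> \<sigma>)"
  by (auto simp: usr_headed_def)

lemma conjuncts_usr_headed: "usr_headed t \<Longrightarrow> conjuncts t = [t]"
  by (auto simp: usr_headed_def)

lemma conj_term_subst: "conj_term t \<Longrightarrow> conj_term (t \<cdot> \<sigma>)"
  by (induction rule: conj_term.induct) (auto intro: conj_term.intros usr_headed_subst)

lemma conjuncts_subst: "conj_term t \<Longrightarrow> conjuncts (t \<cdot> \<sigma>) = conjuncts t \<cdot>\<^sub>l \<sigma>"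
  by (induction rule: conj_term.induct) (auto simp: usr_headed_def)

lemma vars_conj_term: "conj_term t \<Longrightarrow> vars t = vars_list (conjuncts t)"
  by (induction rule: conj_term.induct) (auto simp: usr_headed_def)

lemma enc_body_subst: "enc_body Bs \<cdot> \<sigma> = enc_body (Bs \<cdot>\<^sub>l \<sigma>)"
  by (induction Bs rule: enc_body.induct) auto

lemma vars_enc_body: "vars (enc_body Bs) = vars_list Bs"
  by (induction Bs rule: enc_body.induct) auto

lemma conj_term_enc_body: "\<forall>B\<in>set Bs. usr_headed B \<Longrightarrow> conj_term (enc_body Bs)"
  by (induction Bs rule: enc_body.induct) (auto intro: conj_term.intros)

lemma conjuncts_enc_body: "\<forall>B\<in>set Bs. usr_headed B \<Longrightarrow> conjuncts (enc_body Bs) = Bs"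
  by (induction Bs rule: enc_body.induct) (auto simp: conjuncts_usr_headed)

lemma all_conjuncts_simps [simp]:
  "all_conjuncts [] = []"
  "all_conjuncts (G # Gs) = conjuncts G @ all_conjuncts Gs"
  by (auto simp: all_conjuncts_def)

lemma all_conjuncts_subst:
  "list_all conj_term Gs \<Longrightarrow> all_conjuncts (Gs \<cdot>\<^sub>l \<sigma>) = all_conjuncts Gs \<cdot>\<^sub>l \<sigma>"
  by (induction Gs) (auto simp: conjuncts_subst)

lemma list_all_conj_term_subst: "list_all conj_term Gs \<Longrightarrow> list_all conj_term (Gs \<cdot>\<^sub>l \<sigma>)"
  by (induction Gs) (auto simp: conj_term_subst)

lemma vars_list_map_solve:
  "list_all conj_term Gs \<Longrightarrow> vars_list (map solve Gs) = vars_list (all_conjuncts Gs)"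
  by (induction Gs) (auto simp: vars_conj_term)

lemma user_atom_usr_headed: "user_atom A \<Longrightarrow> usr_headed A"
  by (auto simp: user_atom_def usr_headed_def)

lemma definite_program_usr_headed:
  assumes "definite_program P" "(H, B) \<in> P"
  shows "usr_headed H" "\<forall>b\<in>set B. usr_headed b"
  using assms unfolding definite_program_def clause_atoms_def
  by (fastforce intro: user_atom_usr_headed)+

lemma BE_usr_headed:
  assumes "definite_program P" "Q \<in> BE P"
  shows "usr_headed Q"
proof -
  obtain p ts where Q: "Q = Fn p ts" and "(p, length ts) \<in> preds P"
    using assms(2) unfolding BE_def by blast
  then obtain c A where "c \<in> P" "A \<in> clause_atoms c" "(p, length ts) \<in> pred_of A"
    unfolding preds_def by blast
  moreover from calculation have "usr_headed A"
    using assms(1) unfolding definite_program_def by (blast intro: user_atom_usr_headed)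
  ultimately show ?thesis
    using Q by (auto simp: usr_headed_def)
qed

lemma M0_rename_clause_cases:
  assumes "c \<in> M0 x y"
  obtains "rename_clause \<rho> c = (solve (Fn TrueS []), [])"
  | "rename_clause \<rho> c =
      (solve (Fn Comma [Var (\<rho> x), Var (\<rho> y)]), [solve (Var (\<rho> x)), solve (Var (\<rho> y))])"
  | "rename_clause \<rho> c =
      (solve (Var (\<rho> x)), [Fn ClauseS [Var (\<rho> x), Var (\<rho> y)], solve (Var (\<rho> y))])"
  using assms by (auto simp: M0_def rename_clause_def)

lemma ce_rename_clause:
  assumes "c \<in> ce P"
  obtains H B where "(H, B) \<in> P"
    "rename_clause \<rho> c = (Fn ClauseS [H \<cdot> (Var \<circ> \<rho>), enc_body (B \<cdot>\<^sub>l (Var \<circ> \<rho>))], [])"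
  using assms unfolding ce_def rename_clause_def by (auto simp: enc_body_subst)

section \<open>Calls of the meta-interpreter are calls of the program\<close>

definition solve_query :: "('f sym, 'v) program \<Rightarrow> ('f sym, 'v) trm \<Rightarrow> ('f sym, 'v) trm list \<Rightarrow> bool"
  where "solve_query P Q M \<longleftrightarrow> (\<exists>Gs. M = map solve Gs \<and> list_all conj_term Gs \<and>
    reachable_upto_renaming P Q (all_conjuncts Gs))"

text \<open>The query right after \<open>solve(A)\<close> was resolved with the third clause of \<open>M\<^sub>0\<close>: the fresh
  variable \<open>b\<close> is about to be bound to the encoded body of a clause for \<open>A\<close>.\<close>
definition clause_query :: "('f sym, 'v) program \<Rightarrow> ('f sym, 'v) trm \<Rightarrow> ('f sym, 'v) trm list \<Rightarrow> bool"
  where "clause_query P Q M \<longleftrightarrow> (\<exists>A b Gs.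
    M = Fn ClauseS [A, Var b] # solve (Var b) # map solve Gs \<and> usr_headed A \<and>
    list_all conj_term Gs \<and> b \<notin> vars A \<and> b \<notin> vars_list (all_conjuncts Gs) \<and>
    reachable_upto_renaming P Q (A # all_conjuncts Gs))"

definition failed_query :: "('f sym, 'v) trm list \<Rightarrow> bool" where
  "failed_query M \<longleftrightarrow> (\<exists>t e Ms. M = Fn ClauseS [t, e] # Ms \<and> (t = Fn TrueS [] \<or> (\<exists>ts. t = Fn Comma ts)))"

lemma failed_query_no_step:
  assumes "failed_query M" "definite_program P"
  shows "\<not> ld_step (M0 x y \<union> ce P) M R"
proof
  assume "ld_step (M0 x y \<union> ce P) M R"
  then obtain A Ms c \<rho> \<theta> where M: "M = A # Ms" and c: "c \<in> M0 x y \<union> ce P"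
    and \<theta>: "mgu \<theta> A (fst (rename_clause \<rho> c))"
    by (rule ld_stepE)
  obtain t e where A: "A = Fn ClauseS [t, e]" and t: "t = Fn TrueS [] \<or> (\<exists>ts. t = Fn Comma ts)"
    using assms(1) M unfolding failed_query_def by blast
  have unif: "A \<cdot> \<theta> = fst (rename_clause \<rho> c) \<cdot> \<theta>" using mgu_unifies[OF \<theta>] .
  show False
  proof (cases "c \<in> M0 x y")
    case True
    then show False
      by (rule M0_rename_clause_cases[of c x y \<rho>]) (use unif A in auto)
  next
    case False
    with c obtain H B where HB: "(H, B) \<in> P"
      and rc: "rename_clause \<rho> c = (Fn ClauseS [H \<cdot> (Var \<circ> \<rho>), enc_body (B \<cdot>\<^sub>l (Var \<circ> \<rho>))], [])"
      using ce_rename_clause by blast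
    have "usr_headed H" using definite_program_usr_headed(1)[OF assms(2) HB] .
    then show False using unif rc A t by (auto simp: usr_headed_def)
  qed
qed

lemma solve_query_step_true:
  assumes "list_all conj_term (G # Gs)" "reachable_upto_renaming P Q (all_conjuncts (G # Gs))"
    and "mgu \<theta> (solve G) (solve (Fn TrueS []))"
  shows "solve_query P Q (map solve Gs \<cdot>\<^sub>l \<theta>)"
proof -
  have "conj_term G" using assms(1) by simp
  moreover have "G \<cdot> \<theta> = Fn TrueS []" using mgu_unifies[OF assms(3)] by simp
  ultimately have "G = Fn TrueS []"
    by (cases rule: conj_termE) (auto simp: usr_headed_def)
  then have "reachable_upto_renaming P Q (all_conjuncts Gs \<cdot>\<^sub>l \<theta>)"
    using reachable_upto_renaming_mgu[OF _ assms(3), of P Q _ Var] assms(2) by simp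
  then show ?thesis
    using assms(1) unfolding solve_query_def
    by (intro exI[of _ "Gs \<cdot>\<^sub>l \<theta>"]) (simp add: all_conjuncts_subst list_all_conj_term_subst)
qed

lemma solve_query_step_conj:
  assumes "list_all conj_term (G # Gs)" "reachable_upto_renaming P Q (all_conjuncts (G # Gs))"
    and "a \<noteq> b" "a \<notin> vars_list (all_conjuncts (G # Gs))" "b \<notin> vars_list (all_conjuncts (G # Gs))"
    and "mgu \<theta> (solve G) (solve (Fn Comma [Var a, Var b]))"
  shows "solve_query P Q ((solve (Var a) # solve (Var b) # map solve Gs) \<cdot>\<^sub>l \<theta>)"
proof -
  have "conj_term G" using assms(1) by simp
  moreover have G\<theta>: "G \<cdot> \<theta> = Fn Comma [\<theta> a, \<theta> b]" using mgu_unifies[OF assms(6)] by simp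
  ultimately obtain X Y where G: "G = Fn Comma [X, Y]" and XY: "conj_term X" "conj_term Y"
    by (cases rule: conj_termE) (auto simp: usr_headed_def)
  let ?Gs = "X # Y # Gs"
  have conj: "list_all conj_term ?Gs" using XY assms(1) by simp
  define \<sigma> where "\<sigma> = Var(a := X, b := Y)"
  have fixes_query: "\<forall>z\<in>vars_list (all_conjuncts (G # Gs)). \<sigma> z = Var z"
    using assms(4,5) by (auto simp: \<sigma>_def)
  then have "G \<cdot> \<sigma> = G"
    using assms(1) by (intro subst_id_on_vars) (auto simp: vars_conj_term)
  then have "solve G \<cdot> \<sigma> = solve (Fn Comma [Var a, Var b]) \<cdot> \<sigma>"
    using G assms(3) by (simp add: \<sigma>_def)
  from reachable_upto_renaming_mgu[OF assms(2,6) this fixes_query]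
  have "reachable_upto_renaming P Q (all_conjuncts ?Gs \<cdot>\<^sub>l \<theta>)"
    using G by simp
  moreover have "(solve (Var a) # solve (Var b) # map solve Gs) \<cdot>\<^sub>l \<theta> = map solve (?Gs \<cdot>\<^sub>l \<theta>)"
    using G\<theta> G by simp
  ultimately show ?thesis
    using conj unfolding solve_query_def
    by (intro exI[of _ "?Gs \<cdot>\<^sub>l \<theta>"]) (simp add: all_conjuncts_subst list_all_conj_term_subst del: list.map)
qed

lemma solve_query_step_atom:
  assumes "list_all conj_term (G # Gs)" "reachable_upto_renaming P Q (all_conjuncts (G # Gs))"
    and "a \<noteq> b" "a \<notin> vars_list (all_conjuncts (G # Gs))" "b \<notin> vars_list (all_conjuncts (G # Gs))"
    and "mgu \<theta> (solve G) (solve (Var a))"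
  shows "clause_query P Q ((Fn ClauseS [Var a, Var b] # solve (Var b) # map solve Gs) \<cdot>\<^sub>l \<theta>) \<or>
    failed_query ((Fn ClauseS [Var a, Var b] # solve (Var b) # map solve Gs) \<cdot>\<^sub>l \<theta>)"
    (is "clause_query P Q ?R \<or> failed_query ?R")
proof -
  have "conj_term G" using assms(1) by simp
  moreover have \<theta>a: "\<theta> a = G \<cdot> \<theta>" using mgu_unifies[OF assms(6)] by simp
  ultimately consider "failed_query ?R" | "usr_headed G"
    by (cases rule: conj_termE) (auto simp: failed_query_def)
  then show ?thesis
  proof cases
    case usr: 2
    let ?V = "vars_list (all_conjuncts (G # Gs))"
    have V: "?V = vars G \<union> vars_list (all_conjuncts Gs)"
      using usr by (simp add: conjuncts_usr_headed)
    define \<sigma> where "\<sigma> = Var(a := G)"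
    have fixes_query: "\<forall>z\<in>?V. \<sigma> z = Var z"
      using assms(4) by (auto simp: \<sigma>_def)
    then have "G \<cdot> \<sigma> = G"
      using V by (intro subst_id_on_vars) auto
    then have unif: "solve G \<cdot> \<sigma> = solve (Var a) \<cdot> \<sigma>"
      by (simp add: \<sigma>_def)
    have "\<forall>z\<in>insert b ?V. \<sigma> z = Var z"
      using fixes_query assms(3) by (simp add: \<sigma>_def)
    from mgu_fixed_var_fresh[OF assms(6) unif this assms(5)]
    obtain b' where b': "\<theta> b = Var b'" and fresh: "\<forall>z\<in>?V. b' \<notin> vars (\<theta> z)" .
    have "clause_query P Q ?R"
      unfolding clause_query_def
    proof (intro exI conjI)
      show "?R = Fn ClauseS [G \<cdot> \<theta>, Var b'] # solve (Var b') # map solve (Gs \<cdot>\<^sub>l \<theta>)"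
        using \<theta>a b'(1) by simp
      show "usr_headed (G \<cdot> \<theta>)" using usr by (rule usr_headed_subst)
      show "list_all conj_term (Gs \<cdot>\<^sub>l \<theta>)"
        using assms(1) by (simp add: list_all_conj_term_subst)
      show "b' \<notin> vars (G \<cdot> \<theta>)" "b' \<notin> vars_list (all_conjuncts (Gs \<cdot>\<^sub>l \<theta>))"
        using fresh assms(1) V by (auto simp: vars_subst vars_list_subst all_conjuncts_subst)
      show "reachable_upto_renaming P Q (G \<cdot> \<theta> # all_conjuncts (Gs \<cdot>\<^sub>l \<theta>))"
        using reachable_upto_renaming_mgu[OF assms(2,6) unif fixes_query] usr assms(1)
        by (simp add: conjuncts_usr_headed all_conjuncts_subst)
    qed
    then show ?thesis ..
  qed simp
qed

lemma solve_query_step: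
  assumes "solve_query P Q M" "x \<noteq> y" "ld_step (M0 x y \<union> ce P) M R"
  shows "solve_query P Q R \<or> clause_query P Q R \<or> failed_query R"
proof -
  obtain Gs where M: "M = map solve Gs" and conj: "list_all conj_term Gs"
    and reach: "reachable_upto_renaming P Q (all_conjuncts Gs)"
    using assms(1) unfolding solve_query_def by blast
  obtain A Ms c \<rho> \<theta> where MA: "M = A # Ms" and c: "c \<in> M0 x y \<union> ce P" "bij \<rho>"
    and disj: "vars_clause (rename_clause \<rho> c) \<inter> vars_list M = {}"
    and \<theta>: "mgu \<theta> A (fst (rename_clause \<rho> c))" and R: "R = (snd (rename_clause \<rho> c) @ Ms) \<cdot>\<^sub>l \<theta>"
    using assms(3) by (rule ld_stepE)
  obtain G Gs' where Gs: "Gs = G # Gs'" using M MA by (cases Gs) auto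
  have A: "A = solve G" and Ms: "Ms = map solve Gs'" using M MA Gs by auto
  have "c \<notin> ce P"
  proof
    assume "c \<in> ce P"
    then obtain H B where
      "rename_clause \<rho> c = (Fn ClauseS [H \<cdot> (Var \<circ> \<rho>), enc_body (B \<cdot>\<^sub>l (Var \<circ> \<rho>))], [])"
      by (rule ce_rename_clause)
    then show False using mgu_unifies[OF \<theta>] A by simp
  qed
  with c have "c \<in> M0 x y" by blast
  have xy: "\<rho> x \<noteq> \<rho> y" using assms(2) bij_is_inj[OF c(2)] by (auto dest: injD)
  have fresh: "vars_clause (rename_clause \<rho> c) \<inter> vars_list (all_conjuncts (G # Gs')) = {}"
    using disj M Gs vars_list_map_solve[OF conj] by simp
  note conj = conj[unfolded Gs] and reach = reach[unfolded Gs]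
  from \<open>c \<in> M0 x y\<close> show ?thesis
  proof (cases rule: M0_rename_clause_cases[where \<rho> = \<rho>])
    case 1
    with \<theta> A have "mgu \<theta> (solve G) (solve (Fn TrueS []))" by simp
    from solve_query_step_true[OF conj reach this] show ?thesis
      using R Ms 1 by simp
  next
    case 2
    with \<theta> A have "mgu \<theta> (solve G) (solve (Fn Comma [Var (\<rho> x), Var (\<rho> y)]))" by simp
    from solve_query_step_conj[OF conj reach xy _ _ this] show ?thesis
      using R Ms 2 fresh by (auto simp: vars_clause_def)
  next
    case 3
    with \<theta> A have "mgu \<theta> (solve G) (solve (Var (\<rho> x)))" by simp
    from solve_query_step_atom[OF conj reach xy _ _ this] show ?thesis
      using R Ms 3 fresh by (auto simp: vars_clause_def)
  qed
qed

text \<open>Resolving \<open>clause(A, b)\<close> with the encoding of a clause mirrors resolving \<open>A\<close> with the clause.\<close>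
lemma reachable_upto_renaming_clause_step:
  assumes "reachable_upto_renaming P Q (A # L)" "infinite (UNIV :: 'v set)"
    and "(H, B) \<in> P" "bij \<rho>" "vars_clause (rename_clause \<rho> (H, B)) \<inter> vars_list (A # L) = {}"
    and "mgu \<theta> (Fn f [A, Var b]) (Fn f [H \<cdot> (Var \<circ> \<rho>), e])"
    and "b \<notin> vars A" "b \<notin> vars_list L" "b \<notin> vars_clause (rename_clause \<rho> (H, B))" "b \<notin> vars e"
  shows "reachable_upto_renaming P Q ((B \<cdot>\<^sub>l (Var \<circ> \<rho>) @ L) \<cdot>\<^sub>l (\<theta> :: ('f, 'v) subst))"
proof -
  obtain h :: "'v \<Rightarrow> 'v" and u where h: "inj h" "u \<notin> range h"
    using assms(2) by (rule infinite_imp_inj_not_surj)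
  define \<theta>' where "\<theta>' = (\<lambda>z. if z = b then Var u else \<theta> z \<cdot> (Var \<circ> h))"
  let ?B = "B \<cdot>\<^sub>l (Var \<circ> \<rho>)"
  have bH: "b \<notin> vars (H \<cdot> (Var \<circ> \<rho>))" and bB: "b \<notin> vars_list ?B"
    using assms(9) by (auto simp: vars_clause_def rename_clause_def)
  have "mgu \<theta>' A (H \<cdot> (Var \<circ> \<rho>))"
    unfolding \<theta>'_def using mgu_pair_fresh_var_inverse[OF assms(6,7) bH assms(10) h] .
  then have "ld_step P (A # L) ((?B @ L) \<cdot>\<^sub>l \<theta>')"
    using assms(3-5) by (intro ld_stepI) (auto simp: rename_clause_def)
  moreover have "(?B @ L) \<cdot>\<^sub>l \<theta>' = (?B @ L) \<cdot>\<^sub>l \<theta> \<cdot>\<^sub>l (Var \<circ> h)"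
  proof -
    have "(?B @ L) \<cdot>\<^sub>l \<theta>' = (?B @ L) \<cdot>\<^sub>l (\<lambda>x. \<theta> x \<cdot> (Var \<circ> h))"
      using bB assms(8) by (intro subst_list_cong) (auto simp: \<theta>'_def)
    then show ?thesis by (simp add: subst_subst)
  qed
  ultimately have "ld_step P (A # L) ((?B @ L) \<cdot>\<^sub>l \<theta> \<cdot>\<^sub>l (Var \<circ> h))"
    by (simp only:)
  then have "reachable_upto_renaming P Q ((?B @ L) \<cdot>\<^sub>l \<theta> \<cdot>\<^sub>l (Var \<circ> h))"
    by (rule reachable_upto_renaming_step[OF assms(1)])
  then show ?thesis
    using h(1) by (rule reachable_upto_renaming_inj)
qed

lemma clause_query_step:
  assumes "clause_query P Q M" "infinite (UNIV :: 'v set)" "definite_program P"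
    and "ld_step (M0 x y \<union> ce P) M R"
  shows "solve_query P Q (R :: ('f sym, 'v) trm list)"
proof -
  obtain A b Gs where M: "M = Fn ClauseS [A, Var b] # solve (Var b) # map solve Gs"
    and conj: "list_all conj_term Gs" and bA: "b \<notin> vars A" and bGs: "b \<notin> vars_list (all_conjuncts Gs)"
    and reach: "reachable_upto_renaming P Q (A # all_conjuncts Gs)"
    using assms(1) unfolding clause_query_def by blast
  obtain A0 Ms c \<rho> \<theta> where MA: "M = A0 # Ms" and c: "c \<in> M0 x y \<union> ce P" "bij \<rho>"
    and disj: "vars_clause (rename_clause \<rho> c) \<inter> vars_list M = {}"
    and \<theta>: "mgu \<theta> A0 (fst (rename_clause \<rho> c))" and R: "R = (snd (rename_clause \<rho> c) @ Ms) \<cdot>\<^sub>l \<theta>"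
    using assms(4) by (rule ld_stepE)
  have A0: "A0 = Fn ClauseS [A, Var b]" and Ms: "Ms = solve (Var b) # map solve Gs"
    using M MA by auto
  have "c \<notin> M0 x y"
  proof
    assume "c \<in> M0 x y"
    then show False
      by (rule M0_rename_clause_cases[where \<rho> = \<rho>]) (use mgu_unifies[OF \<theta>] A0 in auto)
  qed
  with c obtain H B where HB: "(H, B) \<in> P"
    and rc: "rename_clause \<rho> c = (Fn ClauseS [H \<cdot> (Var \<circ> \<rho>), enc_body (B \<cdot>\<^sub>l (Var \<circ> \<rho>))], [])"
    using ce_rename_clause by blast
  let ?B = "B \<cdot>\<^sub>l (Var \<circ> \<rho>)"
  have vars_rc: "vars_clause (rename_clause \<rho> c) = vars_clause (rename_clause \<rho> (H, B))"
    using rc by (simp add: vars_clause_def rename_clause_def vars_enc_body)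
  have vars_M: "vars_list M = insert b (vars_list (A # all_conjuncts Gs))"
    using M vars_list_map_solve[OF conj] by auto
  have \<theta>': "mgu \<theta> (Fn ClauseS [A, Var b]) (Fn ClauseS [H \<cdot> (Var \<circ> \<rho>), enc_body ?B])"
    using \<theta> A0 rc by simp
  have "reachable_upto_renaming P Q ((?B @ all_conjuncts Gs) \<cdot>\<^sub>l \<theta>)"
    using disj bA bGs vars_rc vars_M
    by (intro reachable_upto_renaming_clause_step[OF reach assms(2) HB c(2) _ \<theta>'])
      (auto simp: vars_enc_body vars_clause_def rename_clause_def)
  moreover have "\<forall>t\<in>set (?B \<cdot>\<^sub>l \<theta>). usr_headed t"
    using definite_program_usr_headed(2)[OF assms(3) HB] by (auto intro: usr_headed_subst)
  moreover have "R = map solve (enc_body (?B \<cdot>\<^sub>l \<theta>) # Gs \<cdot>\<^sub>l \<theta>)"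
    using R rc Ms mgu_unifies[OF \<theta>'] by (simp add: enc_body_subst)
  ultimately show ?thesis
    unfolding solve_query_def using conj
    by (intro exI[of _ "enc_body (?B \<cdot>\<^sub>l \<theta>) # Gs \<cdot>\<^sub>l \<theta>"])
      (simp add: conj_term_enc_body conjuncts_enc_body all_conjuncts_subst list_all_conj_term_subst)
qed

lemma meta_derivation_invariant:
  assumes "(ld_step (M0 x y \<union> ce P))\<^sup>*\<^sup>* [solve Q] M" "x \<noteq> y" "infinite (UNIV :: 'v set)"
    and "definite_program P" "usr_headed Q"
  shows "solve_query P Q M \<or> clause_query P Q M \<or> failed_query (M :: ('f sym, 'v) trm list)"
  using assms(1)
proof (induction rule: rtranclp_induct)
  case base
  have "solve_query P Q [solve Q]"
    unfolding solve_query_def using assms(5) reachable_upto_renaming_start[of P Q]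
    by (intro exI[of _ "[Q]"]) (simp add: conj_term.intros(3) conjuncts_usr_headed)
  then show ?case ..
next
  case (step M R)
  from step.IH show ?case
  proof (elim disjE)
    assume "solve_query P Q M"
    then show ?thesis using assms(2) step.hyps(2) by (rule solve_query_step)
  next
    assume "clause_query P Q M"
    then have "solve_query P Q R" using assms(3,4) step.hyps(2) by (rule clause_query_step)
    then show ?thesis ..
  next
    assume "failed_query M"
    then show ?thesis using failed_query_no_step[OF _ assms(4)] step.hyps(2) by blast
  qed
qed

lemma solve_Call_imp_Call:
  assumes "x \<noteq> y" "infinite (UNIV :: 'v set)" "definite_program P" "Q \<in> BE P"
    and "solve A \<in> Call (M0 x y \<union> ce P) {[solve Q]}" "A \<in> BE P"
  shows "A \<in> Call P {[Q :: ('f sym, 'v) trm]}"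
proof -
  obtain M' Ms where derivation: "(ld_step (M0 x y \<union> ce P))\<^sup>*\<^sup>* [solve Q] (M' # Ms)"
    and "variant (solve A) M'"
    using assms(5) unfolding Call_def by blast
  then obtain \<rho> where \<rho>: "bij \<rho>" "M' = solve (A \<cdot> (Var \<circ> \<rho>))"
    unfolding variant_def by auto
  have "solve_query P Q (M' # Ms)"
    using meta_derivation_invariant[OF derivation assms(1-3) BE_usr_headed[OF assms(3,4)]] \<rho>(2)
    by (auto simp: clause_query_def failed_query_def)
  then obtain Gs where reach: "reachable_upto_renaming P Q (A \<cdot> (Var \<circ> \<rho>) # all_conjuncts Gs)"
    using \<rho>(2) usr_headed_subst[OF BE_usr_headed[OF assms(3,6)]]
    unfolding solve_query_def by (auto simp: Cons_eq_map_conv conjuncts_usr_headed)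
  have "reachable_upto_renaming P Q
      ((A \<cdot> (Var \<circ> \<rho>) # all_conjuncts Gs) \<cdot>\<^sub>l (Var \<circ> inv \<rho>))"
    using reach bij_imp_bij_inv[OF \<rho>(1)] by (rule reachable_upto_renaming_rename)
  then have "reachable_upto_renaming P Q (A # all_conjuncts Gs \<cdot>\<^sub>l (Var \<circ> inv \<rho>))"
    using bij_is_inj[OF \<rho>(1)] by (simp add: rename_rename)
  then show ?thesis
    by (rule reachable_upto_renaming_Call)
qed

section \<open>Calls of the program are calls of the meta-interpreter\<close>

lemma meta_step_true: "ld_step (M0 x y \<union> ce P) (solve (Fn TrueS []) # Ms) Ms"
proof (rule ld_stepI)
  show "(solve (Fn TrueS []), []) \<in> M0 x y \<union> ce P" by (simp add: M0_def)
  show "mgu Var (solve (Fn TrueS [])) (fst (rename_clause id (solve (Fn TrueS []), [])))"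
    by (rule mguI_absorbing) (auto simp: rename_clause_def)
qed (auto simp: rename_clause_def vars_clause_def)

lemma meta_step_conj:
  assumes "x \<noteq> y" "infinite (UNIV :: 'v set)"
  shows "ld_step (M0 x y \<union> ce P) (solve (Fn Comma [X, Y]) # Ms)
    (solve X # solve Y # (Ms :: ('f sym, 'v) trm list))"
proof -
  obtain a b where ab: "a \<noteq> b" "a \<notin> vars_list (X # Y # Ms)" "b \<notin> vars_list (X # Y # Ms)"
    using ex_two_fresh[OF assms(2) finite_vars_list] by blast
  obtain \<rho> where \<rho>: "bij \<rho>" "\<rho> x = a" "\<rho> y = b"
    using bij_mapping_two_points[OF assms(1) ab(1)] by blast
  let ?\<sigma> = "Var(a := X, b := Y)"
  have XY: "X \<cdot> ?\<sigma> = X" "Y \<cdot> ?\<sigma> = Y" "Ms \<cdot>\<^sub>l ?\<sigma> = Ms"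
    using ab by (auto intro!: subst_id_on_vars subst_list_id_on_vars)
  have "mgu ?\<sigma> (solve (Fn Comma [X, Y])) (solve (Fn Comma [Var a, Var b]))"
    by (rule mguI_absorbing) (use XY ab(1) in auto)
  with \<rho> ab XY show ?thesis
    by (intro ld_stepI[where c = "(solve (Fn Comma [Var x, Var y]), [solve (Var x), solve (Var y)])"])
      (auto simp: M0_def rename_clause_def vars_clause_def)
qed

text \<open>The third clause of \<open>M\<^sub>0\<close> followed by the encoding of \<open>H \<leftarrow> B\<close> performs the LD-step
  that resolves \<open>A\<close> with \<open>H \<leftarrow> B\<close>.\<close>
lemma meta_steps_clause:
  assumes "x \<noteq> y" "infinite (UNIV :: 'v set)" "(H, B) \<in> P" "bij \<rho>"
    and disj: "vars_clause (rename_clause \<rho> (H, B)) \<inter> vars_list (A # Ms) = {}"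
    and \<theta>: "mgu \<theta> A (H \<cdot> (Var \<circ> \<rho>))"
  shows "(ld_step (M0 x y \<union> ce P))\<^sup>*\<^sup>* (solve A # Ms)
    (solve (enc_body (B \<cdot>\<^sub>l (Var \<circ> \<rho>) \<cdot>\<^sub>l \<theta>)) # Ms \<cdot>\<^sub>l (\<theta> :: ('f sym, 'v) subst))"
proof -
  let ?H = "H \<cdot> (Var \<circ> \<rho>)" and ?E = "enc_body (B \<cdot>\<^sub>l (Var \<circ> \<rho>))"
  let ?S = "vars_list (A # Ms) \<union> vars_clause (rename_clause \<rho> (H, B))"
  have "finite ?S" by (simp add: vars_clause_def)
  with assms(2) obtain a b where ab: "a \<noteq> b" "a \<notin> ?S" "b \<notin> ?S"
    by (rule ex_two_fresh)
  have vars_c: "vars_clause (rename_clause \<rho> (H, B)) = vars ?H \<union> vars ?E"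
    by (simp add: vars_clause_def rename_clause_def vars_enc_body)
  obtain \<rho>' where \<rho>': "bij \<rho>'" "\<rho>' x = a" "\<rho>' y = b"
    using bij_mapping_two_points[OF assms(1) ab(1)] by blast
  have A: "A \<cdot> Var(a := A) = A" "Ms \<cdot>\<^sub>l Var(a := A) = Ms"
    using ab by (auto intro!: subst_id_on_vars subst_list_id_on_vars)
  have "mgu (Var(a := A)) (solve A) (solve (Var a))"
    by (rule mguI_absorbing) (use A in auto)
  with \<rho>' ab A have step1: "ld_step (M0 x y \<union> ce P) (solve A # Ms)
      (Fn ClauseS [A, Var b] # solve (Var b) # Ms)"
    by (intro ld_stepI[where c = "(solve (Var x), [Fn ClauseS [Var x, Var y], solve (Var y)])"
          and \<rho> = \<rho>' and \<theta> = "Var(a := A)"])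
      (auto simp: M0_def rename_clause_def vars_clause_def)
  have "mgu (\<theta>(b := ?E \<cdot> \<theta>)) (Fn ClauseS [A, Var b]) (Fn ClauseS [?H, ?E])"
    using ab vars_c by (intro mgu_pair_fresh_var[OF \<theta>]) auto
  moreover have "Ms \<cdot>\<^sub>l \<theta>(b := ?E \<cdot> \<theta>) = Ms \<cdot>\<^sub>l \<theta>"
    using ab by (intro subst_list_cong) auto
  ultimately have step2: "ld_step (M0 x y \<union> ce P) (Fn ClauseS [A, Var b] # solve (Var b) # Ms)
      (solve (?E \<cdot> \<theta>) # Ms \<cdot>\<^sub>l \<theta>)"
    using assms(3,4) disj ab vars_c
    by (intro ld_stepI[where c = "(Fn ClauseS [H, enc_body B], [])" and \<rho> = \<rho>
          and \<theta> = "\<theta>(b := ?E \<cdot> \<theta>)"])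
      (auto simp: ce_def rename_clause_def vars_clause_def enc_body_subst)
  from step1 step2 show ?thesis
    by (simp add: enc_body_subst)
qed

lemma meta_reaches_first_conjunct:
  assumes "x \<noteq> y" "infinite (UNIV :: 'v set)"
  shows "list_all conj_term Gs \<Longrightarrow> all_conjuncts Gs = A # L \<Longrightarrow>
    \<exists>Gs'. (ld_step (M0 x y \<union> ce P))\<^sup>*\<^sup>* (map solve Gs) (solve A # map solve Gs') \<and>
      list_all conj_term Gs' \<and> all_conjuncts Gs' = L \<and> usr_headed (A :: ('f sym, 'v) trm)"
proof (induction "sum_list (map size Gs)" arbitrary: Gs rule: less_induct)
  case less
  obtain G Gs0 where Gs: "Gs = G # Gs0" using less.prems(2) by (cases Gs) auto
  have "conj_term G" using less.prems(1) Gs by simp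
  then show ?case
  proof (cases rule: conj_termE)
    case 1
    with Gs less.prems obtain Gs' where
      "(ld_step (M0 x y \<union> ce P))\<^sup>*\<^sup>* (map solve Gs0) (solve A # map solve Gs')"
      "list_all conj_term Gs'" "all_conjuncts Gs' = L" "usr_headed A"
      using less.hyps[of Gs0] by auto
    moreover have "ld_step (M0 x y \<union> ce P) (map solve Gs) (map solve Gs0)"
      using Gs 1 meta_step_true by simp
    ultimately show ?thesis
      by (blast intro: converse_rtranclp_into_rtranclp)
  next
    case (2 X Y)
    with Gs less.prems obtain Gs' where
      "(ld_step (M0 x y \<union> ce P))\<^sup>*\<^sup>* (map solve (X # Y # Gs0)) (solve A # map solve Gs')"
      "list_all conj_term Gs'" "all_conjuncts Gs' = L" "usr_headed A"
      using less.hyps[of "X # Y # Gs0"] by auto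
    moreover have "ld_step (M0 x y \<union> ce P) (map solve Gs) (map solve (X # Y # Gs0))"
      using Gs 2 meta_step_conj[OF assms] by simp
    ultimately show ?thesis
      by (blast intro: converse_rtranclp_into_rtranclp)
  next
    case 3
    then show ?thesis
      using Gs less.prems by (intro exI[of _ Gs0]) (auto simp: conjuncts_usr_headed)
  qed
qed

lemma meta_simulates_ld:
  assumes "(ld_step P)\<^sup>*\<^sup>* [Q] L" "x \<noteq> y" "infinite (UNIV :: 'v set)" "definite_program P"
    and "usr_headed Q"
  shows "\<exists>Gs. (ld_step (M0 x y \<union> ce P))\<^sup>*\<^sup>* [solve Q] (map solve Gs) \<and> list_all conj_term Gs \<and>
    all_conjuncts Gs = (L :: ('f sym, 'v) trm list)"
  using assms(1)
proof (induction rule: rtranclp_induct)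
  case base
  show ?case
    using assms(5) by (intro exI[of _ "[Q]"]) (simp add: conj_term.intros(3) conjuncts_usr_headed)
next
  case (step L R)
  obtain Gs where Gs: "(ld_step (M0 x y \<union> ce P))\<^sup>*\<^sup>* [solve Q] (map solve Gs)"
    "list_all conj_term Gs" "all_conjuncts Gs = L"
    using step.IH by blast
  obtain A Os c \<rho> \<theta> where L: "L = A # Os" and c: "c \<in> P" "bij \<rho>"
    and disj: "vars_clause (rename_clause \<rho> c) \<inter> vars_list L = {}"
    and \<theta>: "mgu \<theta> A (fst (rename_clause \<rho> c))" and R: "R = (snd (rename_clause \<rho> c) @ Os) \<cdot>\<^sub>l \<theta>"
    using step.hyps(2) by (rule ld_stepE)
  obtain H B where c_HB: "c = (H, B)" by (cases c)
  obtain Gs' where Gs': "(ld_step (M0 x y \<union> ce P))\<^sup>*\<^sup>* (map solve Gs) (solve A # map solve Gs')"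
    "list_all conj_term Gs'" "all_conjuncts Gs' = Os"
    using meta_reaches_first_conjunct[OF assms(2,3) Gs(2)] Gs(3) L by blast
  let ?E = "enc_body (B \<cdot>\<^sub>l (Var \<circ> \<rho>) \<cdot>\<^sub>l \<theta>)"
  have "(ld_step (M0 x y \<union> ce P))\<^sup>*\<^sup>* (solve A # map solve Gs') (solve ?E # map solve Gs' \<cdot>\<^sub>l \<theta>)"
    using disj \<theta> L c_HB vars_list_map_solve[OF Gs'(2)] Gs'(3)
    by (intro meta_steps_clause[OF assms(2,3) c(1)[unfolded c_HB] c(2)]) (auto simp: rename_clause_def)
  with Gs(1) Gs'(1) have "(ld_step (M0 x y \<union> ce P))\<^sup>*\<^sup>* [solve Q] (map solve (?E # Gs' \<cdot>\<^sub>l \<theta>))"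
    by (simp add: comp_def)
  moreover have "\<forall>t\<in>set (B \<cdot>\<^sub>l (Var \<circ> \<rho>) \<cdot>\<^sub>l \<theta>). usr_headed t"
    using definite_program_usr_headed(2)[OF assms(4) c(1)[unfolded c_HB]]
    by (auto intro: usr_headed_subst)
  ultimately show ?case
    using Gs'(2,3) R c_HB
    by (intro exI[of _ "?E # Gs' \<cdot>\<^sub>l \<theta>"])
      (auto simp: conj_term_enc_body conjuncts_enc_body all_conjuncts_subst list_all_conj_term_subst
        rename_clause_def)
qed

lemma Call_imp_solve_Call:
  assumes "x \<noteq> y" "infinite (UNIV :: 'v set)" "definite_program P" "Q \<in> BE P"
    and "A \<in> Call P {[Q :: ('f sym, 'v) trm]}"
  shows "solve A \<in> Call (M0 x y \<union> ce P) {[solve Q]}"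
proof -
  obtain A' L where derivation: "(ld_step P)\<^sup>*\<^sup>* [Q] (A' # L)" and "variant A A'"
    using assms(5) unfolding Call_def by blast
  then have variant: "variant (solve A) (solve A')"
    unfolding variant_def by auto
  obtain Gs where simulation: "(ld_step (M0 x y \<union> ce P))\<^sup>*\<^sup>* [solve Q] (map solve Gs)"
    and conj: "list_all conj_term Gs" and "all_conjuncts Gs = A' # L"
    using meta_simulates_ld[OF derivation assms(1-3) BE_usr_headed[OF assms(3,4)]] by blast
  then obtain Gs' where "(ld_step (M0 x y \<union> ce P))\<^sup>*\<^sup>* (map solve Gs) (solve A' # map solve Gs')"
    using meta_reaches_first_conjunct[OF assms(1,2) conj] by blast
  with simulation variant show ?thesis
    unfolding Call_def by (blast intro: rtranclp_trans)
qed

theorem mainTheorem1: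
  fixes P :: "('f sym, 'v) program" and Q :: "('f sym, 'v) trm" and x y :: 'v
  assumes "infinite (UNIV :: 'v set)"
    and "x \<noteq> y"
    and "definite_program P"
    and "Q \<in> BE P"
  shows "(\<forall>A \<in> Call P {[Q]}. \<exists>A'. solve A' \<in> Call (M0 x y \<union> ce P) {[solve Q]} \<and> variant A A')
       \<and> (\<forall>A. solve A \<in> Call (M0 x y \<union> ce P) {[solve Q]} \<and> A \<in> BE P
              \<longrightarrow> (\<exists>A' \<in> Call P {[Q]}. variant A A'))"
proof -
  have variant_refl: "variant A A" for A :: "('f sym, 'v) trm"
    unfolding variant_def by (intro exI[of _ id]) simp
  show ?thesis
    using Call_imp_solve_Call[OF assms(2,1,3,4)] solve_Call_imp_Call[OF assms(2,1,3,4)] variant_refl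
    by blast
qed

end
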